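(* At a positive, non-pinched, log-colored crossing the braiding $\tau\hat R$ factors as \[ \tau\hat R=\frac1N\,\mathcal Z_{\mathsf E}(\mathcal Z_{\mathsf N}\otimes\mathcal Z_{\mathsf S})\mathcal Z_{\mathsf W}, \] where \begin{align*} \mathcal Z_{\mathsf E}(\hat v_{n_1n_2})&=\Lambda(\zeta^0_{\mathsf E},\zeta^1_{\mathsf E}\mid n_1-n_2)^{-1}\hat v_{n_1n_2},\\ \mathcal Z_{\mathsf W}(\hat v_{n_1n_2})&=\omega^{-(N-1)(\zeta^0_{\mathsf W}+\zeta^1_{\mathsf W})}\,\omega^{n_2-n_1}\,\Lambda(\zeta^0_{\mathsf W},\zeta^1_{\mathsf W}\mid n_2-n_1-1)^{-1}\hat v_{n_1n_2},\\ \mathcal Z_{\mathsf N}(\hat v_n)&=\sum_{n'=0}^{N-1}\Lambda(\zeta^0_{\mathsf N},\zeta^1_{\mathsf N}\mid n'-n)\hat v_{n'},\qquad \mathcal Z_{\mathsf S}(\hat v_n)=\sum_{n'=0}^{N-1}\Lambda(\zeta^0_{\mathsf S},\zeta^1_{\mathsf S}\mid n-n')\hat v_{n'}. \end{align*} At a negative, non-pinched, log-colored crossing the braiding $\bar R\tau$ factors as \[ \bar R\tau=\frac1N\,\bar{\mathcal Z}_{\mathsf E}(\bar{\mathcal Z}_{\mathsf S}\otimes\bar{\mathcal Z}_{\mathsf N})\bar{\mathcal Z}_{\mathsf W}, \] where \begin{align*} \bar{\mathcal Z}_{\mathsf E}(\hat v_{n_1n_2})&=\omega^{(N-1)(\zeta^0_{\mathsf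 E}+\zeta^1_{\mathsf E})}\Lambda(\zeta^0_{\mathsf E},\zeta^1_{\mathsf E}\mid n_1-n_2-1)\hat v_{n_1n_2},\\ \bar{\mathcal Z}_{\mathsf W}(\hat v_{n_1n_2})&=\omega^{n_2-n_1}\Lambda(\zeta^0_{\mathsf W},\zeta^1_{\mathsf W}\mid n_2-n_1)\hat v_{n_1n_2},\\ \bar{\mathcal Z}_{\mathsf N}(\hat v_n)&=\omega^{-(N-1)(\zeta^0_{\mathsf N}+\zeta^1_{\mathsf N})}\sum_{n'}\Lambda(\zeta^0_{\mathsf N},\zeta^1_{\mathsf N}\mid n-n'-1)^{-1}\hat v_{n'},\\ \bar{\mathcal Z}_{\mathsf S}(\hat v_n)&=\omega^{-(N-1)(\zeta^0_{\mathsf S}+\zeta^1_{\mathsf S})}\sum_{n'}\Lambda(\zeta^0_{\mathsf S},\zeta^1_{\mathsf S}\mid n'-n-1)^{-1}\hat v_{n'}. \end{align*}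
   Context: $N\ge2$, $\omega=e^{2\pi i/N}$, $\omega^x=e^{2\pi ix/N}$. $V(\alpha,\beta,\mu)=\mathbb C^N$ with basis $\hat v_n$ ($n\in\mathbb Z/N$); $\hat v_{n_1n_2}=\hat v_{n_1}\otimes\hat v_{n_2}$; sums over indices run over $\mathbb Z/N$. Log-colored crossing of sign $\epsilon\in\{\pm1\}$: incoming segments $1,2$, outgoing $1',2'$ (1 continues as $1'$, 2 as $2'$), regions $\mathsf N,\mathsf W,\mathsf S,\mathsf E$ with incoming side reading ($\mathsf N$, 1, $\mathsf W$, 2, $\mathsf S$) and outgoing side ($\mathsf N$, $2'$, $\mathsf E$, $1'$, $\mathsf S$); complex numbers $\beta_s$ ($s\in\{1,2,1',2'\}$), $\gamma_{\mathsf N},\gamma_{\mathsf W},\gamma_{\mathsf S},\gamma_{\mathsf E}$, $\mu_1,\mu_2$. Put $\alpha_1=\gamma_{\mathsf W}-\gamma_{\mathsf N}$, $\alpha_2=\gamma_{\mathsf S}-\gamma_{\mathsf W}$, $\alpha_{2'}=\gamma_{\mathsf E}-\gamma_{\mathsf N}$, $\alpha_{1'}=\gamma_{\mathsf S}-\gamma_{\mathsf E}$, $a_s=e^{2\pi i\alpha_s}$, $b_s=e^{2\pi i\beta_s}$, $m_j=e^{2\pi i\mu_j}$. Required (all values nonzero, finite): if $\epsilon=+1$, $a_{1'}=a_1/A$, $a_{2'}=a_2A$, $A=1-\frac{m_1b_1}{b_2}(1-\frac{a_1}{m_1})(1-\frac1{m_2a_2})$, $b_{1'}=\frac{m_2b_2}{m_1}(1-m_2a_2(1-\frac{b_2}{m_1b_1}))^{-1}$,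 $b_{2'}=b_1(1-\frac{m_1}{a_1}(1-\frac{b_2}{m_1b_1}))$; if $\epsilon=-1$, $a_{1'}=a_1/\tilde A$, $a_{2'}=a_2\tilde A$, $\tilde A=1-\frac{b_2}{m_1b_1}(1-m_1a_1)(1-\frac{m_2}{a_2})$, $b_{1'}=\frac{m_2b_2}{m_1}(1-\frac{a_2}{m_2}(1-\frac{m_1b_1}{b_2}))$, $b_{2'}=b_1(1-\frac1{m_1a_1}(1-\frac{m_1b_1}{b_2}))^{-1}$. Segment $s$ carries $V(\alpha_s,\beta_s,\mu_s)$ with $\mu_{1'}=\mu_1,\mu_{2'}=\mu_2$. Define $\zeta^0_{\mathsf N}=\epsilon(\beta_{2'}-\beta_1)$, $\zeta^0_{\mathsf W}=\epsilon(\beta_2-\beta_1-\mu_1)$, $\zeta^0_{\mathsf S}=\epsilon(\beta_2-\beta_{1'}+\mu_2-\mu_1)$, $\zeta^0_{\mathsf E}=\epsilon(\beta_{2'}-\beta_{1'}+\mu_2)$; the crossing is pinched if some $\zeta^0_j\in\mathbb Z$. If not pinched, choose $\kappa$ with $e^{2\pi i\kappa}=e^{2\pi i\gamma_{\mathsf N}}/(1-(b_{2'}/b_1)^\epsilon)$ and set $\zeta^1_{\mathsf N}=\kappa-\gamma_{\mathsf N}$, $\zeta^1_{\mathsf W}=\kappa-\gamma_{\mathsf W}+\epsilon\mu_1$, $\zeta^1_{\mathsf S}=\kappa-\gamma_{\mathsf S}+\epsilon(\mu_1-\mu_2)$, $\zeta^1_{\mathsf E}=\kappa-\gamma_{\mathsf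 E}-\epsilon\mu_2$, so $e^{2\pi i\zeta^1_j}=1/(1-e^{2\pi i\zeta^0_j})$. Quantum dilogarithm: $\Phi_{\mathsf b}(z)=\exp\int_{\mathbb R+i0}\frac{e^{-2izw}}{4\sinh(w\mathsf b)\sinh(w/\mathsf b)}\frac{dw}{w}$ (meromorphically continued), $c=\frac i2(\sqrt N+1/\sqrt N)$, $\Lambda(\zeta)=\Phi_{\sqrt N}(i\zeta/\sqrt N-c+i/\sqrt N)$, and for $e^{2\pi i\zeta^1}=1/(1-e^{2\pi i\zeta^0})$, $n\in\mathbb Z$: $\Lambda(\zeta^0,\zeta^1\mid n)=\omega^{-\zeta^0\zeta^1/2}\omega^{-n\zeta^1}\Lambda(\zeta^0+n)$ (this is $N$-periodic in $n$). $R$-matrices: for $\epsilon=+1$, $\hat R_{n_1n_2}^{n_1'n_2'}=\frac{\omega^{-(N-1)(\zeta^0_{\mathsf W}+\zeta^1_{\mathsf W})}}N\omega^{n_2-n_1}\frac{\Lambda(\zeta^0_{\mathsf N},\zeta^1_{\mathsf N}\mid n_2'-n_1)\Lambda(\zeta^0_{\mathsf S},\zeta^1_{\mathsf S}\mid n_2-n_1')}{\Lambda(\zeta^0_{\mathsf W},\zeta^1_{\mathsf W}\mid n_2-n_1-1)\Lambda(\zeta^0_{\mathsf E},\zeta^1_{\mathsf E}\mid n_2'-n_1')}$; for $\epsilon=-1$, $\bar R_{n_1n_2}^{n_1'n_2'}=\frac{\omega^{(N-1)(\zeta^0_{\mathsf E}+\zeta^1_{\mathsf E}-\zeta^0_{\mathsf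 S}-\zeta^1_{\mathsf S}-\zeta^0_{\mathsf N}-\zeta^1_{\mathsf N})}}N\omega^{n_1-n_2}\frac{\Lambda(\zeta^0_{\mathsf W},\zeta^1_{\mathsf W}\mid n_1-n_2)\Lambda(\zeta^0_{\mathsf E},\zeta^1_{\mathsf E}\mid n_1'-n_2'-1)}{\Lambda(\zeta^0_{\mathsf N},\zeta^1_{\mathsf N}\mid n_1-n_2'-1)\Lambda(\zeta^0_{\mathsf S},\zeta^1_{\mathsf S}\mid n_1'-n_2-1)}$. With $M(\hat v_{n_1n_2})=\sum M_{n_1n_2}^{n_1'n_2'}\hat v_{n_1'n_2'}$ for $M=\hat R,\bar R$ and $\tau$ the flip of tensor factors, the braiding is $\tau\hat R$ for $\epsilon=+1$ (i.e. $\hat v_{n_1n_2}\mapsto\sum\hat R_{n_1n_2}^{n_1'n_2'}\hat v_{n_2'}\otimes\hat v_{n_1'}$) and $\bar R\tau$ for $\epsilon=-1$. *)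

theory Defs
  imports "HOL-Complex_Analysis.Complex_Analysis"
begin

definition cexp2 :: "complex \<Rightarrow> complex" where
  "cexp2 x = exp (2 * of_real pi * \<i> * x)"

definition om :: "nat \<Rightarrow> complex \<Rightarrow> complex" where
  "om N x = exp (2 * of_real pi * \<i> * x / of_nat N)"

text \<open>The contour is taken as the horizontal
  line Im w = delta with 0 < delta below the first pole min(pi b, pi/b) of the integrand in the
  upper half plane (the pole at w = 0 is passed above); the integral does not depend on such
  delta.\<close>
definition qd_delta :: "real \<Rightarrow> real" where
  "qd_delta b = min (pi * b) (pi / b) / 2"

definition qd_integrand :: "real \<Rightarrow> complex \<Rightarrow> complex \<Rightarrow> complex" where
  "qd_integrand b z w =
     exp (- 2 * \<i> * z * w) / (4 * sinh (w * of_real b) * sinh (w / of_real b)) / w"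

definition qd_strip :: "real \<Rightarrow> complex set" where
  "qd_strip b = {z. \<bar>Im z\<bar> < (b + 1 / b) / 2}"

definition qd_on_strip :: "real \<Rightarrow> complex \<Rightarrow> complex" where
  "qd_on_strip b z =
     exp (integral UNIV (\<lambda>t::real. qd_integrand b z (of_real t + \<i> * of_real (qd_delta b))))"

definition Phi_b :: "real \<Rightarrow> complex \<Rightarrow> complex" where
  "Phi_b b = (SOME f. f nicely_meromorphic_on UNIV \<and> (\<forall>z \<in> qd_strip b. f z = qd_on_strip b z))"

definition cconst :: "nat \<Rightarrow> complex" where
  "cconst N = \<i> / 2 * (of_real (sqrt (real N)) + 1 / of_real (sqrt (real N)))"

definition Lam :: "nat \<Rightarrow> complex \<Rightarrow> complex" where
  "Lam N \<zeta> = Phi_b (sqrt (real N))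
      (\<i> * \<zeta> / of_real (sqrt (real N)) - cconst N + \<i> / of_real (sqrt (real N)))"

definition LamI :: "nat \<Rightarrow> complex \<Rightarrow> complex \<Rightarrow> int \<Rightarrow> complex" where
  "LamI N z0 z1 n = om N (- z0 * z1 / 2) * om N (- of_int n * z1) * Lam N (z0 + of_int n)"

datatype region = RN | RW | RS | RE

definition log_colored_crossing ::
  "int \<Rightarrow> complex \<Rightarrow> complex \<Rightarrow> complex \<Rightarrow> complex \<Rightarrow>
   complex \<Rightarrow> complex \<Rightarrow> complex \<Rightarrow> complex \<Rightarrow> complex \<Rightarrow> complex \<Rightarrow> bool" where
  "log_colored_crossing eps be1 be2 be1' be2' gN gW gS gE mu1 mu2 \<longleftrightarrow>
    (let a1 = cexp2 (gW - gN); a2 = cexp2 (gS - gW);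
         a2' = cexp2 (gE - gN); a1' = cexp2 (gS - gE);
         b1 = cexp2 be1; b2 = cexp2 be2; b1' = cexp2 be1'; b2' = cexp2 be2';
         m1 = cexp2 mu1; m2 = cexp2 mu2 in
     (eps = 1 \<and>
       (let A = 1 - m1 * b1 / b2 * (1 - a1 / m1) * (1 - 1 / (m2 * a2));
            D = 1 - m2 * a2 * (1 - b2 / (m1 * b1)) in
        A \<noteq> 0 \<and> D \<noteq> 0 \<and> a1' = a1 / A \<and> a2' = a2 * A \<and>
        b1' = m2 * b2 / m1 * inverse D \<and>
        b2' = b1 * (1 - m1 / a1 * (1 - b2 / (m1 * b1)))))
   \<or> (eps = -1 \<and>
       (let A = 1 - b2 / (m1 * b1) * (1 - m1 * a1) * (1 - m2 / a2);
            D = 1 - 1 / (m1 * a1) * (1 - m1 * b1 / b2) in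
        A \<noteq> 0 \<and> D \<noteq> 0 \<and> a1' = a1 / A \<and> a2' = a2 * A \<and>
        b1' = m2 * b2 / m1 * (1 - a2 / m2 * (1 - m1 * b1 / b2)) \<and>
        b2' = b1 * inverse D)))"

definition zeta0 :: "int \<Rightarrow> complex \<Rightarrow> complex \<Rightarrow> complex \<Rightarrow> complex \<Rightarrow>
    complex \<Rightarrow> complex \<Rightarrow> region \<Rightarrow> complex" where
  "zeta0 eps be1 be2 be1' be2' mu1 mu2 r = of_int eps *
     (case r of
        RN \<Rightarrow> be2' - be1
      | RW \<Rightarrow> be2 - be1 - mu1
      | RS \<Rightarrow> be2 - be1' + mu2 - mu1
      | RE \<Rightarrow> be2' - be1' + mu2)"

definition pinched :: "(region \<Rightarrow> complex) \<Rightarrow> bool" where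
  "pinched z0 \<longleftrightarrow> (\<exists>r. z0 r \<in> \<int>)"

definition zeta1 :: "int \<Rightarrow> complex \<Rightarrow> complex \<Rightarrow> complex \<Rightarrow> complex \<Rightarrow> complex \<Rightarrow>
    complex \<Rightarrow> complex \<Rightarrow> region \<Rightarrow> complex" where
  "zeta1 eps ka gN gW gS gE mu1 mu2 r =
     (case r of
        RN \<Rightarrow> ka - gN
      | RW \<Rightarrow> ka - gW + of_int eps * mu1
      | RS \<Rightarrow> ka - gS + of_int eps * (mu1 - mu2)
      | RE \<Rightarrow> ka - gE - of_int eps * mu2)"

definition Rhat :: "nat \<Rightarrow> (region \<Rightarrow> complex) \<Rightarrow> (region \<Rightarrow> complex) \<Rightarrow>
    int \<Rightarrow> int \<Rightarrow> int \<Rightarrow> int \<Rightarrow> complex" where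
  "Rhat N z0 z1 n1 n2 n1' n2' =
     om N (- (of_nat N - 1) * (z0 RW + z1 RW)) / of_nat N * om N (of_int (n2 - n1)) *
     (LamI N (z0 RN) (z1 RN) (n2' - n1) * LamI N (z0 RS) (z1 RS) (n2 - n1')) /
     (LamI N (z0 RW) (z1 RW) (n2 - n1 - 1) * LamI N (z0 RE) (z1 RE) (n2' - n1'))"

definition Rbar :: "nat \<Rightarrow> (region \<Rightarrow> complex) \<Rightarrow> (region \<Rightarrow> complex) \<Rightarrow>
    int \<Rightarrow> int \<Rightarrow> int \<Rightarrow> int \<Rightarrow> complex" where
  "Rbar N z0 z1 n1 n2 n1' n2' =
     om N ((of_nat N - 1) * (z0 RE + z1 RE - z0 RS - z1 RS - z0 RN - z1 RN)) / of_nat N *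
     om N (of_int (n1 - n2)) *
     (LamI N (z0 RW) (z1 RW) (n1 - n2) * LamI N (z0 RE) (z1 RE) (n1' - n2' - 1)) /
     (LamI N (z0 RN) (z1 RN) (n1 - n2' - 1) * LamI N (z0 RS) (z1 RS) (n1' - n2 - 1))"

text \<open>V = C^N has basis v_n, n \<in> {0..<N} (representing Z/N).  A vector of V \<otimes> V is its
  coefficient function x (x a b = coefficient of v_a \<otimes> v_b).  A linear map M on V is given by
  its matrix M n n' = coefficient of v_n' in M(v_n).\<close>

type_synonym vec2 = "int \<Rightarrow> int \<Rightarrow> complex"

definition bv2 :: "int \<Rightarrow> int \<Rightarrow> vec2" where
  "bv2 n1 n2 = (\<lambda>a b. if a = n1 \<and> b = n2 then 1 else 0)"

definition idx :: "nat \<Rightarrow> int set" where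
  "idx N = {0..<int N}"

definition apply2 :: "nat \<Rightarrow> (int \<Rightarrow> int \<Rightarrow> int \<Rightarrow> int \<Rightarrow> complex) \<Rightarrow> vec2 \<Rightarrow> vec2" where
  "apply2 N M x = (\<lambda>a b. \<Sum>n1\<in>idx N. \<Sum>n2\<in>idx N. M n1 n2 a b * x n1 n2)"

definition tensor_op :: "nat \<Rightarrow> (int \<Rightarrow> int \<Rightarrow> complex) \<Rightarrow> (int \<Rightarrow> int \<Rightarrow> complex) \<Rightarrow> vec2 \<Rightarrow> vec2" where
  "tensor_op N A B x = (\<lambda>a b. \<Sum>n1\<in>idx N. \<Sum>n2\<in>idx N. A n1 a * B n2 b * x n1 n2)"

definition diag_op :: "(int \<Rightarrow> int \<Rightarrow> complex) \<Rightarrow> vec2 \<Rightarrow> vec2" where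
  "diag_op d x = (\<lambda>a b. d a b * x a b)"

definition scale2 :: "complex \<Rightarrow> vec2 \<Rightarrow> vec2" where
  "scale2 c x = (\<lambda>a b. c * x a b)"

text \<open>tau Rhat: v_{n1 n2} \<mapsto> \<Sum> Rhat^{n1' n2'}_{n1 n2} v_{n2'} \<otimes> v_{n1'}.\<close>
definition braid_pos :: "nat \<Rightarrow> (region \<Rightarrow> complex) \<Rightarrow> (region \<Rightarrow> complex) \<Rightarrow> vec2 \<Rightarrow> vec2" where
  "braid_pos N z0 z1 = apply2 N (\<lambda>n1 n2 a b. Rhat N z0 z1 n1 n2 b a)"

text \<open>Rbar tau: v_{n1 n2} \<mapsto> Rbar(v_{n2 n1}).\<close>
definition braid_neg :: "nat \<Rightarrow> (region \<Rightarrow> complex) \<Rightarrow> (region \<Rightarrow> complex) \<Rightarrow> vec2 \<Rightarrow> vec2" where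
  "braid_neg N z0 z1 = apply2 N (\<lambda>n1 n2 a b. Rbar N z0 z1 n2 n1 a b)"

definition ZE :: "nat \<Rightarrow> (region \<Rightarrow> complex) \<Rightarrow> (region \<Rightarrow> complex) \<Rightarrow> vec2 \<Rightarrow> vec2" where
  "ZE N z0 z1 = diag_op (\<lambda>n1 n2. inverse (LamI N (z0 RE) (z1 RE) (n1 - n2)))"

definition ZW :: "nat \<Rightarrow> (region \<Rightarrow> complex) \<Rightarrow> (region \<Rightarrow> complex) \<Rightarrow> vec2 \<Rightarrow> vec2" where
  "ZW N z0 z1 = diag_op (\<lambda>n1 n2. om N (- (of_nat N - 1) * (z0 RW + z1 RW)) *
      om N (of_int (n2 - n1)) * inverse (LamI N (z0 RW) (z1 RW) (n2 - n1 - 1)))"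

definition ZN :: "nat \<Rightarrow> (region \<Rightarrow> complex) \<Rightarrow> (region \<Rightarrow> complex) \<Rightarrow> int \<Rightarrow> int \<Rightarrow> complex" where
  "ZN N z0 z1 n n' = LamI N (z0 RN) (z1 RN) (n' - n)"

definition ZS :: "nat \<Rightarrow> (region \<Rightarrow> complex) \<Rightarrow> (region \<Rightarrow> complex) \<Rightarrow> int \<Rightarrow> int \<Rightarrow> complex" where
  "ZS N z0 z1 n n' = LamI N (z0 RS) (z1 RS) (n - n')"

definition ZbE :: "nat \<Rightarrow> (region \<Rightarrow> complex) \<Rightarrow> (region \<Rightarrow> complex) \<Rightarrow> vec2 \<Rightarrow> vec2" where
  "ZbE N z0 z1 = diag_op (\<lambda>n1 n2. om N ((of_nat N - 1) * (z0 RE + z1 RE)) *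
      LamI N (z0 RE) (z1 RE) (n1 - n2 - 1))"

definition ZbW :: "nat \<Rightarrow> (region \<Rightarrow> complex) \<Rightarrow> (region \<Rightarrow> complex) \<Rightarrow> vec2 \<Rightarrow> vec2" where
  "ZbW N z0 z1 = diag_op (\<lambda>n1 n2. om N (of_int (n2 - n1)) * LamI N (z0 RW) (z1 RW) (n2 - n1))"

definition ZbN :: "nat \<Rightarrow> (region \<Rightarrow> complex) \<Rightarrow> (region \<Rightarrow> complex) \<Rightarrow> int \<Rightarrow> int \<Rightarrow> complex" where
  "ZbN N z0 z1 n n' = om N (- (of_nat N - 1) * (z0 RN + z1 RN)) *
      inverse (LamI N (z0 RN) (z1 RN) (n - n' - 1))"

definition ZbS :: "nat \<Rightarrow> (region \<Rightarrow> complex) \<Rightarrow> (region \<Rightarrow> complex) \<Rightarrow> int \<Rightarrow> int \<Rightarrow> complex" where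
  "ZbS N z0 z1 n n' = om N (- (of_nat N - 1) * (z0 RS + z1 RS)) *
      inverse (LamI N (z0 RS) (z1 RS) (n' - n - 1))"

end

theory Submission
  imports Defs
begin

text \<open>Both factorizations are entrywise identities: applied to a basis vector, a diagonal
  operator contributes one scalar and a tensor product of matrices one product of entries, so
  each side is a single product of \<open>\<Lambda>\<close>-values and powers of \<open>\<omega>\<close>, and the two products agree
  once the scalar prefactor of \<open>R\<close> is split by additivity of the exponent of \<open>\<omega>\<close>.
  The identities hold for arbitrary \<open>\<zeta>\<^sup>0, \<zeta>\<^sup>1\<close>: the crossing and non-pinching hypotheses only
  ensure that the inverted \<open>\<Lambda>\<close>-values are nonzero, whereas in HOL \<open>inverse 0 = 0\<close> makes
  both sides agree anyway.\<close>

lemma om_add: "om N (x + y) = om N x * om N y"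
  unfolding om_def by (simp add: add_divide_distrib distrib_left exp_add)

lemma sum_idx_bv2:
  assumes "n1 \<in> idx N" "n2 \<in> idx N"
  shows "(\<Sum>m1\<in>idx N. \<Sum>m2\<in>idx N. f m1 m2 * bv2 n1 n2 m1 m2) = f n1 n2"
proof -
  have "(\<Sum>m1\<in>idx N. \<Sum>m2\<in>idx N. f m1 m2 * bv2 n1 n2 m1 m2)
      = (\<Sum>m1\<in>idx N. if m1 = n1 then (\<Sum>m2\<in>idx N. if m2 = n2 then f m1 m2 else 0) else 0)"
    by (rule sum.cong) (auto simp: bv2_def intro!: sum.cong)
  also have "\<dots> = f n1 n2"
    using assms by (simp add: idx_def)
  finally show ?thesis .
qed

lemma apply2_bv2:
  assumes "n1 \<in> idx N" "n2 \<in> idx N"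
  shows "apply2 N M (bv2 n1 n2) a b = M n1 n2 a b"
  unfolding apply2_def using sum_idx_bv2[OF assms, of "\<lambda>m1 m2. M m1 m2 a b"] by simp

lemma tensor_op_diag_op_bv2:
  assumes "n1 \<in> idx N" "n2 \<in> idx N"
  shows "tensor_op N A B (diag_op d (bv2 n1 n2)) a b = A n1 a * B n2 b * d n1 n2"
  unfolding tensor_op_def diag_op_def
  using sum_idx_bv2[OF assms, of "\<lambda>m1 m2. A m1 a * B m2 b * d m1 m2"] by (simp add: mult.assoc)

lemma braid_pos_factorization:
  assumes "n1 \<in> idx N" "n2 \<in> idx N"
  shows "braid_pos N z0 z1 (bv2 n1 n2) a b =
         scale2 (1 / of_nat N)
           (ZE N z0 z1 (tensor_op N (ZN N z0 z1) (ZS N z0 z1) (ZW N z0 z1 (bv2 n1 n2)))) a b"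
  unfolding braid_pos_def apply2_bv2[OF assms] scale2_def ZE_def ZW_def
  by (subst diag_op_def, simp only: tensor_op_diag_op_bv2[OF assms])
     (simp add: Rhat_def ZN_def ZS_def divide_inverse mult_ac)

lemma braid_neg_factorization:
  assumes "n1 \<in> idx N" "n2 \<in> idx N"
  shows "braid_neg N z0 z1 (bv2 n1 n2) a b =
         scale2 (1 / of_nat N)
           (ZbE N z0 z1 (tensor_op N (ZbS N z0 z1) (ZbN N z0 z1) (ZbW N z0 z1 (bv2 n1 n2)))) a b"
proof -
  have prefactor: "om N ((of_nat N - 1) * (z0 RE + z1 RE - z0 RS - z1 RS - z0 RN - z1 RN))
      = om N ((of_nat N - 1) * (z0 RE + z1 RE)) * om N (- (of_nat N - 1) * (z0 RS + z1 RS))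
        * om N (- (of_nat N - 1) * (z0 RN + z1 RN))"
    unfolding om_add[symmetric] by (simp add: algebra_simps)
  show ?thesis
    unfolding braid_neg_def apply2_bv2[OF assms] scale2_def ZbE_def ZbW_def
    by (subst diag_op_def, simp only: tensor_op_diag_op_bv2[OF assms])
       (simp add: Rbar_def ZbN_def ZbS_def prefactor divide_inverse mult_ac)
qed

theorem theorem4p3:
  fixes N :: nat and eps :: int
    and be1 be2 be1' be2' gN gW gS gE mu1 mu2 ka :: complex
  assumes "N \<ge> 2"
    and "eps = 1 \<or> eps = -1"
    and cross: "log_colored_crossing eps be1 be2 be1' be2' gN gW gS gE mu1 mu2"
    and nonpinched: "\<not> pinched (zeta0 eps be1 be2 be1' be2' mu1 mu2)"
    and kappa: "cexp2 ka = cexp2 gN / (1 - (cexp2 be2' / cexp2 be1) powi eps)"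
  defines "z0 \<equiv> zeta0 eps be1 be2 be1' be2' mu1 mu2"
    and "z1 \<equiv> zeta1 eps ka gN gW gS gE mu1 mu2"
  shows "(eps = 1 \<longrightarrow>
            (\<forall>n1\<in>idx N. \<forall>n2\<in>idx N. \<forall>a\<in>idx N. \<forall>b\<in>idx N.
               braid_pos N z0 z1 (bv2 n1 n2) a b =
               scale2 (1 / of_nat N)
                 (ZE N z0 z1 (tensor_op N (ZN N z0 z1) (ZS N z0 z1) (ZW N z0 z1 (bv2 n1 n2)))) a b))
       \<and> (eps = -1 \<longrightarrow>
            (\<forall>n1\<in>idx N. \<forall>n2\<in>idx N. \<forall>a\<in>idx N. \<forall>b\<in>idx N.
               braid_neg N z0 z1 (bv2 n1 n2) a b =
               scale2 (1 / of_nat N)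
                 (ZbE N z0 z1 (tensor_op N (ZbS N z0 z1) (ZbN N z0 z1) (ZbW N z0 z1 (bv2 n1 n2)))) a b))"
  using braid_pos_factorization braid_neg_factorization by blast

end
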